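(* Let $G$ be a group and $L,R$ nonempty subsets of $G$, and consider $2\mathrm{S}(G;L,R)$. (1) There exist two words in $L$ of different lengths whose values are weakly connected to each other if and only if there is a word in $L$ of positive length whose value is weakly connected to $e$. (2) For $n\ge 1$, there exists a word $w_{L,n}$ in $L$ of length $n$ with $w_{L,n}\sim e$ if and only if there exists a word $w_{L^{-1},n}$ in $L^{-1}$ of length $n$ with $w_{L^{-1},n}\sim e$. The analogous statements with $R$ in place of $L$ also hold.
   Context: For nonempty subsets $L,R$ of a group $G$, the two-sided group digraph $2\mathrm{S}(G;L,R)$ has vertex set $G$ and a directed arc $(g,h)$ if and only if $h=l^{-1}gr$ for some $l\in L$, $r\in R$. A word in a set $S$ of length $n$ is a product $s_1\cdots s_n$ with $s_i\in S$; $w_{S,n}$ denotes the element given by such a word. Vertex $g$ is weakly connected to $h$, written $g\sim h$, if there is a sequence $g=g_0,g_1,\dots,g_n=h$ such that for each $i$ either $(g_{i-1},g_i)$ or $(g_i,g_{i-1})$ is an arc. *)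

theory Defs
  imports "HOL-Algebra.Group"
begin

definition twoS_arcs :: "('a, 'b) monoid_scheme \<Rightarrow> 'a set \<Rightarrow> 'a set \<Rightarrow> ('a \<times> 'a) set" where
  "twoS_arcs G L R = {(g, h). g \<in> carrier G \<and> h \<in> carrier G \<and>
     (\<exists>l\<in>L. \<exists>r\<in>R. h = inv\<^bsub>G\<^esub> l \<otimes>\<^bsub>G\<^esub> g \<otimes>\<^bsub>G\<^esub> r)}"

definition weakly_connected :: "('a, 'b) monoid_scheme \<Rightarrow> 'a set \<Rightarrow> 'a set \<Rightarrow> 'a \<Rightarrow> 'a \<Rightarrow> bool" where
  "weakly_connected G L R g h \<longleftrightarrow>
     (g, h) \<in> (twoS_arcs G L R \<union> (twoS_arcs G L R)\<inverse>)\<^sup>*"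

definition word_val :: "('a, 'b) monoid_scheme \<Rightarrow> 'a list \<Rightarrow> 'a" where
  "word_val G xs = foldr (\<lambda>x y. x \<otimes>\<^bsub>G\<^esub> y) xs \<one>\<^bsub>G\<^esub>"

definition set_inv :: "('a, 'b) monoid_scheme \<Rightarrow> 'a set \<Rightarrow> 'a set" where
  "set_inv G S = (\<lambda>x. inv\<^bsub>G\<^esub> x) ` S"

end

theory Submission
  imports Defs
begin

text \<open>
  For \<open>l \<in> L\<close> and \<open>r \<in> R\<close> there is an arc from \<open>l g\<close> to \<open>g r\<close>, so a word of
  length \<open>n\<close> in \<open>L\<close> is weakly connected to \<open>r\<^sup>n\<close> and a word in \<open>L\<inverse>\<close> to \<open>r\<^sup>-\<^sup>n\<close>.
  Weak connectivity is invariant under right multiplication by \<open>r\<^sup>\<plusminus>\<^sup>1\<close>, because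
  \<open>R\<inverse>R\<close> and \<open>RR\<inverse>\<close> move every vertex within its component. Hence on the cyclic
  group generated by \<open>r\<close> it is translation invariant: \<open>r\<^sup>m \<sim> r\<^sup>n\<close> gives
  \<open>1 \<sim> r\<^sup>n\<^sup>-\<^sup>m\<close>, and \<open>r\<^sup>n \<sim> 1\<close> gives \<open>r\<^sup>-\<^sup>n \<sim> 1\<close>; both parts of the theorem
  follow by comparing with constant words.
  The statements about \<open>R\<close> are the mirror image: inversion maps 2S(G;L,R) onto
  2S(G;R,L), exchanging left and right multiplication.
\<close>

lemma rtrancl_symcl_sym: "(x, y) \<in> (A \<union> A\<inverse>)\<^sup>* \<Longrightarrow> (y, x) \<in> (A \<union> A\<inverse>)\<^sup>*"
  using sym_rtrancl[OF sym_Un_converse] by (rule symD)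

lemma rtrancl_symcl_map:
  assumes "(x, y) \<in> (A \<union> A\<inverse>)\<^sup>*"
    and "\<And>a b. (a, b) \<in> A \<Longrightarrow> (f a, f b) \<in> (B \<union> B\<inverse>)\<^sup>*"
  shows "(f x, f y) \<in> (B \<union> B\<inverse>)\<^sup>*"
  using assms(1)
proof (induction rule: rtrancl_induct)
  case (step y z)
  with assms(2) have "(f y, f z) \<in> (B \<union> B\<inverse>)\<^sup>*"
    by (blast intro: rtrancl_symcl_sym)
  with step.IH show ?case by (rule rtrancl_trans)
qed simp

lemma weakly_connected_refl: "weakly_connected G L R g g"
  by (simp add: weakly_connected_def)

lemma weakly_connected_trans [trans]:
  "weakly_connected G L R g h \<Longrightarrow> weakly_connected G L R h k \<Longrightarrow> weakly_connected G L R g k"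
  unfolding weakly_connected_def by (rule rtrancl_trans)

lemma weakly_connected_sym:
  "weakly_connected G L R g h \<Longrightarrow> weakly_connected G L R h g"
  unfolding weakly_connected_def by (rule rtrancl_symcl_sym)

lemma (in group) inv_mult_cancel_left [simp]:
  "x \<in> carrier G \<Longrightarrow> y \<in> carrier G \<Longrightarrow> inv x \<otimes> (x \<otimes> y) = y"
  and mult_inv_cancel_left [simp]:
  "x \<in> carrier G \<Longrightarrow> y \<in> carrier G \<Longrightarrow> x \<otimes> (inv x \<otimes> y) = y"
  by (simp_all add: m_assoc [symmetric])

lemma word_val_Nil [simp]: "word_val G [] = \<one>\<^bsub>G\<^esub>"
  and word_val_Cons [simp]: "word_val G (x # xs) = x \<otimes>\<^bsub>G\<^esub> word_val G xs"
  by (simp_all add: word_val_def)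

lemma (in monoid) word_val_closed: "set xs \<subseteq> carrier G \<Longrightarrow> word_val G xs \<in> carrier G"
  by (induction xs) auto

lemma (in group) weakly_connected_inv:
  assumes "L \<subseteq> carrier G" "R \<subseteq> carrier G" "weakly_connected G L R g h"
  shows "weakly_connected G R L (inv g) (inv h)"
proof -
  have arc: "(inv a, inv b) \<in> twoS_arcs G R L" if "(a, b) \<in> twoS_arcs G L R" for a b
  proof -
    from that obtain l r where lr: "a \<in> carrier G" "l \<in> L" "r \<in> R" "b = inv l \<otimes> a \<otimes> r"
      by (auto simp: twoS_arcs_def)
    with assms(1,2) have "l \<in> carrier G" "r \<in> carrier G" by auto
    with lr have "inv b = inv r \<otimes> inv a \<otimes> l"
      by (simp add: inv_mult_group m_assoc)
    with lr \<open>l \<in> carrier G\<close> \<open>r \<in> carrier G\<close> show ?thesis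
      by (auto simp: twoS_arcs_def)
  qed
  show ?thesis
    using rtrancl_symcl_map[OF assms(3)[unfolded weakly_connected_def], of "m_inv G"] arc
    unfolding weakly_connected_def by blast
qed

locale two_sided_group_digraph = group G for G (structure) +
  fixes L R :: "'a set"
  assumes L_subset: "L \<subseteq> carrier G" and L_nonempty: "L \<noteq> {}"
    and R_subset: "R \<subseteq> carrier G" and R_nonempty: "R \<noteq> {}"
begin

abbreviation conn (infix "\<sim>" 50) where "g \<sim> h \<equiv> weakly_connected G L R g h"

lemma arc_connected: "g \<in> carrier G \<Longrightarrow> l \<in> L \<Longrightarrow> r \<in> R \<Longrightarrow> g \<sim> inv l \<otimes> g \<otimes> r"
  unfolding weakly_connected_def using L_subset R_subset
  by (intro r_into_rtrancl) (auto simp: twoS_arcs_def)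

lemma weakly_connected_preserved:
  assumes "\<And>y l r. y \<in> carrier G \<Longrightarrow> l \<in> L \<Longrightarrow> r \<in> R \<Longrightarrow> f y \<sim> f (inv l \<otimes> y \<otimes> r)"
    and "g \<sim> h"
  shows "f g \<sim> f h"
  using rtrancl_symcl_map[OF assms(2)[unfolded weakly_connected_def], of f] assms(1)
  unfolding weakly_connected_def by (auto simp: twoS_arcs_def)

definition right_stabilizer :: "'a set" where
  "right_stabilizer = {c \<in> carrier G. \<forall>g\<in>carrier G. g \<sim> g \<otimes> c}"

lemma right_stabilizer_mult:
  assumes c: "c \<in> right_stabilizer" and d: "d \<in> right_stabilizer"
  shows "c \<otimes> d \<in> right_stabilizer"
proof -
  have carr: "c \<in> carrier G" "d \<in> carrier G"
    using c d by (simp_all add: right_stabilizer_def)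
  have "g \<sim> g \<otimes> (c \<otimes> d)" if g: "g \<in> carrier G" for g
  proof -
    have "g \<sim> g \<otimes> c" using c g by (simp add: right_stabilizer_def)
    also have "\<dots> \<sim> g \<otimes> c \<otimes> d" using d g carr by (simp add: right_stabilizer_def)
    also have "\<dots> = g \<otimes> (c \<otimes> d)" using g carr by (simp add: m_assoc)
    finally show ?thesis .
  qed
  with carr show ?thesis by (simp add: right_stabilizer_def)
qed

text \<open>\<open>g\<close> and \<open>g r\<inverse> r'\<close> are out-neighbours of \<open>l g r\<inverse>\<close>, while \<open>g\<close> and
  \<open>g r r'\<inverse>\<close> have the common out-neighbour \<open>l\<inverse> g r\<close>.\<close>

lemma inv_mult_in_right_stabilizer:
  assumes "r \<in> R" "r' \<in> R"
  shows "inv r \<otimes> r' \<in> right_stabilizer"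
proof -
  obtain l where l: "l \<in> L" using L_nonempty by blast
  have carr: "l \<in> carrier G" "r \<in> carrier G" "r' \<in> carrier G"
    using l assms L_subset R_subset by auto
  have "g \<sim> g \<otimes> (inv r \<otimes> r')" if g: "g \<in> carrier G" for g
  proof -
    let ?x = "l \<otimes> g \<otimes> inv r"
    have "?x \<sim> g" and "?x \<sim> g \<otimes> (inv r \<otimes> r')"
      using arc_connected[of ?x l r] arc_connected[of ?x l r'] l assms carr g by (simp_all add: m_assoc)
    then show ?thesis by (blast intro: weakly_connected_sym weakly_connected_trans)
  qed
  with carr show ?thesis by (simp add: right_stabilizer_def)
qed

lemma mult_inv_in_right_stabilizer:
  assumes "r \<in> R" "r' \<in> R"
  shows "r \<otimes> inv r' \<in> right_stabilizer"
proof -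
  obtain l where l: "l \<in> L" using L_nonempty by blast
  have carr: "l \<in> carrier G" "r \<in> carrier G" "r' \<in> carrier G"
    using l assms L_subset R_subset by auto
  have "g \<sim> g \<otimes> (r \<otimes> inv r')" if g: "g \<in> carrier G" for g
  proof -
    have "g \<sim> inv l \<otimes> g \<otimes> r" and "g \<otimes> (r \<otimes> inv r') \<sim> inv l \<otimes> g \<otimes> r"
      using arc_connected[of g l r] arc_connected[of "g \<otimes> (r \<otimes> inv r')" l r'] l assms carr g
      by (simp_all add: m_assoc)
    then show ?thesis by (blast intro: weakly_connected_sym weakly_connected_trans)
  qed
  with carr show ?thesis by (simp add: right_stabilizer_def)
qed

definition right_invariant :: "'a set" where
  "right_invariant =
     {d \<in> carrier G. \<forall>g\<in>carrier G. \<forall>h\<in>carrier G. g \<sim> h \<longrightarrow> g \<otimes> d \<sim> h \<otimes> d}"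

lemma in_right_invariantI:
  assumes "d \<in> carrier G"
    and "\<And>y l r. y \<in> carrier G \<Longrightarrow> l \<in> L \<Longrightarrow> r \<in> R \<Longrightarrow> y \<otimes> d \<sim> inv l \<otimes> y \<otimes> r \<otimes> d"
  shows "d \<in> right_invariant"
  using assms weakly_connected_preserved[of "\<lambda>y. y \<otimes> d"] by (simp add: right_invariant_def)

text \<open>Right multiplication by \<open>r\<close> turns the arc \<open>y \<rightarrow> l\<inverse> y r'\<close> into the path
  \<open>y r \<sim> y r' \<rightarrow> l\<inverse> y r' r\<close>, using that \<open>r\<inverse> r'\<close> stabilizes every vertex.\<close>

lemma R_right_invariant: "r \<in> R \<Longrightarrow> r \<in> right_invariant"
proof (rule in_right_invariantI)
  fix y l r' assume r: "r \<in> R" and y: "y \<in> carrier G" and l: "l \<in> L" and r': "r' \<in> R"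
  have carr: "l \<in> carrier G" "r \<in> carrier G" "r' \<in> carrier G"
    using l r r' L_subset R_subset by auto
  have "y \<otimes> r \<sim> y \<otimes> r \<otimes> (inv r \<otimes> r')"
    using inv_mult_in_right_stabilizer[OF r r'] y carr by (simp add: right_stabilizer_def)
  also have "y \<otimes> r \<otimes> (inv r \<otimes> r') = y \<otimes> r'"
    using y carr by (simp add: m_assoc)
  also have "y \<otimes> r' \<sim> inv l \<otimes> (y \<otimes> r') \<otimes> r"
    using arc_connected l r y carr by simp
  finally show "y \<otimes> r \<sim> inv l \<otimes> y \<otimes> r' \<otimes> r"
    using y carr by (simp add: m_assoc)
qed (use R_subset in auto)

lemma inv_R_right_invariant: "r \<in> R \<Longrightarrow> inv r \<in> right_invariant"
proof (rule in_right_invariantI)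
  fix y l r' assume r: "r \<in> R" and y: "y \<in> carrier G" and l: "l \<in> L" and r': "r' \<in> R"
  have carr: "l \<in> carrier G" "r \<in> carrier G" "r' \<in> carrier G"
    using l r r' L_subset R_subset by auto
  let ?c = "(inv r' \<otimes> r) \<otimes> (r' \<otimes> inv r)"
  have "?c \<in> right_stabilizer"
    by (intro right_stabilizer_mult inv_mult_in_right_stabilizer mult_inv_in_right_stabilizer r r')
  have "y \<otimes> inv r \<sim> inv l \<otimes> (y \<otimes> inv r) \<otimes> r'"
    using arc_connected l r' y carr by simp
  also have "\<dots> \<sim> inv l \<otimes> (y \<otimes> inv r) \<otimes> r' \<otimes> ?c"
    using \<open>?c \<in> right_stabilizer\<close> y carr by (simp add: right_stabilizer_def)
  also have "inv l \<otimes> (y \<otimes> inv r) \<otimes> r' \<otimes> ?c = inv l \<otimes> y \<otimes> r' \<otimes> inv r"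
    using y carr by (simp add: m_assoc)
  finally show "y \<otimes> inv r \<sim> inv l \<otimes> y \<otimes> r' \<otimes> inv r" .
qed (use R_subset in auto)

lemma right_invariant_mult:
  assumes c: "c \<in> right_invariant" and d: "d \<in> right_invariant"
  shows "c \<otimes> d \<in> right_invariant"
  unfolding right_invariant_def
proof (intro CollectI conjI ballI impI)
  fix g h assume g: "g \<in> carrier G" and h: "h \<in> carrier G" and "g \<sim> h"
  with c have "g \<otimes> c \<sim> h \<otimes> c" by (simp add: right_invariant_def)
  with c d g h have "g \<otimes> c \<otimes> d \<sim> h \<otimes> c \<otimes> d" by (simp add: right_invariant_def)
  with c d g h show "g \<otimes> (c \<otimes> d) \<sim> h \<otimes> (c \<otimes> d)"
    by (simp add: right_invariant_def m_assoc)
qed (use c d in \<open>simp add: right_invariant_def\<close>)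

lemma right_invariant_nat_pow: "d \<in> right_invariant \<Longrightarrow> d [^] (n::nat) \<in> right_invariant"
proof (induction n)
  case 0
  then show ?case by (simp add: right_invariant_def)
next
  case (Suc n)
  then show ?case by (simp add: right_invariant_mult)
qed

lemma right_invariant_int_pow:
  assumes "d \<in> right_invariant" "inv d \<in> right_invariant"
  shows "d [^] (k::int) \<in> right_invariant"
proof (cases "k < 0")
  case True
  have "d \<in> carrier G" using assms(1) by (simp add: right_invariant_def)
  with True have "d [^] k = inv d [^] nat (- k)"
    by (simp only: int_pow_def2 nat_pow_inv if_True)
  with assms(2) show ?thesis by (simp add: right_invariant_nat_pow)
next
  case False
  then have "d [^] k = d [^] nat k" by (simp only: int_pow_def2 if_False)
  with assms(1) show ?thesis by (simp add: right_invariant_nat_pow)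
qed

lemma R_pow_translate:
  fixes i j k :: int
  assumes "r \<in> R" "r [^] i \<sim> r [^] j"
  shows "r [^] (i + k) \<sim> r [^] (j + k)"
proof -
  have "r [^] k \<in> right_invariant"
    using assms(1) by (intro right_invariant_int_pow R_right_invariant inv_R_right_invariant)
  with assms show ?thesis
    using R_subset by (auto simp: right_invariant_def int_pow_mult)
qed

lemma word_slides_right:
  assumes "\<And>x g. x \<in> set xs \<Longrightarrow> g \<in> carrier G \<Longrightarrow> x \<otimes> g \<sim> g \<otimes> c"
    and "set xs \<subseteq> carrier G" "c \<in> carrier G" "g \<in> carrier G"
  shows "word_val G xs \<otimes> g \<sim> g \<otimes> c [^] length xs"
  using assms
proof (induction xs arbitrary: g)
  case Nil
  then show ?case by (simp add: weakly_connected_refl)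
next
  case (Cons x xs)
  have carr: "x \<in> carrier G" "word_val G xs \<in> carrier G"
    using Cons.prems(2) word_val_closed by auto
  have "word_val G (x # xs) \<otimes> g = x \<otimes> (word_val G xs \<otimes> g)"
    using carr Cons.prems by (simp add: m_assoc)
  also have "\<dots> \<sim> word_val G xs \<otimes> (g \<otimes> c)"
    using Cons.prems(1)[of x "word_val G xs \<otimes> g"] carr Cons.prems by (simp add: m_assoc)
  also have "\<dots> \<sim> g \<otimes> c \<otimes> c [^] length xs"
    using Cons by simp
  also have "g \<otimes> c \<otimes> c [^] length xs = g \<otimes> c [^] length (x # xs)"
    using Cons.prems by (simp only: length_Cons nat_pow_Suc2 m_assoc nat_pow_closed)
  finally show ?case .
qed

lemma word_slides_left:
  assumes "\<And>x g. x \<in> set xs \<Longrightarrow> g \<in> carrier G \<Longrightarrow> g \<otimes> x \<sim> c \<otimes> g"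
    and "set xs \<subseteq> carrier G" "c \<in> carrier G" "g \<in> carrier G"
  shows "g \<otimes> word_val G xs \<sim> c [^] length xs \<otimes> g"
  using assms
proof (induction xs arbitrary: g)
  case Nil
  then show ?case by (simp add: weakly_connected_refl)
next
  case (Cons x xs)
  have carr: "x \<in> carrier G" "word_val G xs \<in> carrier G"
    using Cons.prems(2) word_val_closed by auto
  have "g \<otimes> word_val G (x # xs) = g \<otimes> x \<otimes> word_val G xs"
    using carr Cons.prems by (simp add: m_assoc)
  also have "\<dots> \<sim> c [^] length xs \<otimes> (g \<otimes> x)"
    using Cons carr by simp
  also have "\<dots> \<sim> c \<otimes> (c [^] length xs \<otimes> g)"
    using Cons.prems(1)[of x "c [^] length xs \<otimes> g"] carr Cons.prems by (simp add: m_assoc)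
  also have "c \<otimes> (c [^] length xs \<otimes> g) = c [^] length (x # xs) \<otimes> g"
    using Cons.prems by (simp only: length_Cons nat_pow_Suc2 m_assoc nat_pow_closed)
  finally show ?case .
qed

lemma L_word_connected_pow:
  assumes "set xs \<subseteq> L" "r \<in> R"
  shows "word_val G xs \<sim> r [^] int (length xs)"
proof -
  have "x \<otimes> g \<sim> g \<otimes> r" if "x \<in> set xs" "g \<in> carrier G" for x g
  proof -
    have "x \<in> L" "x \<in> carrier G" "r \<in> carrier G"
      using that assms L_subset R_subset by auto
    then show ?thesis using arc_connected[of "x \<otimes> g" x r] that assms by (simp add: m_assoc)
  qed
  from word_slides_right[of xs r \<one>, OF this] assms L_subset R_subset show ?thesis
    by (auto simp: int_pow_int word_val_closed)
qed

lemma inv_L_word_connected_pow: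
  assumes "set xs \<subseteq> set_inv G L" "r \<in> R"
  shows "word_val G xs \<sim> r [^] - int (length xs)"
proof -
  have "x \<otimes> g \<sim> g \<otimes> inv r" if "x \<in> set xs" "g \<in> carrier G" for x g
  proof -
    from that assms obtain l where l: "l \<in> L" "x = inv l" by (auto simp: set_inv_def)
    moreover have "l \<in> carrier G" "r \<in> carrier G"
      using l assms L_subset R_subset by auto
    ultimately have "g \<otimes> inv r \<sim> x \<otimes> g"
      using arc_connected[of "g \<otimes> inv r" l r] that assms by (simp add: m_assoc)
    then show ?thesis by (rule weakly_connected_sym)
  qed
  moreover have "set xs \<subseteq> carrier G" "r \<in> carrier G"
    using assms L_subset R_subset by (auto simp: set_inv_def)
  ultimately show ?thesis
    using word_slides_right[of xs "inv r" \<one>] by (simp add: int_pow_neg_int nat_pow_inv word_val_closed)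
qed

lemma R_word_connected_pow:
  assumes "set xs \<subseteq> R" "l \<in> L"
  shows "word_val G xs \<sim> l [^] int (length xs)"
proof -
  have "g \<otimes> x \<sim> l \<otimes> g" if "x \<in> set xs" "g \<in> carrier G" for x g
  proof -
    have "x \<in> R" "x \<in> carrier G" "l \<in> carrier G"
      using that assms L_subset R_subset by auto
    then have "l \<otimes> g \<sim> g \<otimes> x"
      using arc_connected[of "l \<otimes> g" l x] that assms by (simp add: m_assoc)
    then show ?thesis by (rule weakly_connected_sym)
  qed
  from word_slides_left[of xs l \<one>, OF this] assms L_subset R_subset show ?thesis
    by (auto simp: int_pow_int word_val_closed)
qed

lemma inv_R_word_connected_pow:
  assumes "set xs \<subseteq> set_inv G R" "l \<in> L"
  shows "word_val G xs \<sim> l [^] - int (length xs)"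
proof -
  have "g \<otimes> x \<sim> inv l \<otimes> g" if "x \<in> set xs" "g \<in> carrier G" for x g
  proof -
    from that assms obtain r where r: "r \<in> R" "x = inv r" by (auto simp: set_inv_def)
    moreover have "l \<in> carrier G" "r \<in> carrier G"
      using r assms L_subset R_subset by auto
    ultimately show ?thesis
      using arc_connected[of "g \<otimes> inv r" l r] that assms by (simp add: m_assoc)
  qed
  moreover have "set xs \<subseteq> carrier G" "l \<in> carrier G"
    using assms L_subset R_subset by (auto simp: set_inv_def)
  ultimately show ?thesis
    using word_slides_left[of xs "inv l" \<one>] by (simp add: int_pow_neg_int nat_pow_inv word_val_closed)
qed

text \<open>Inversion turns left translations of 2S(G;L,R) into right translations of 2S(G;R,L),
  where \<open>L\<close> plays the role of the right-hand set.\<close>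

lemma L_pow_translate:
  fixes i j k :: int
  assumes "l \<in> L" "l [^] i \<sim> l [^] j"
  shows "l [^] (i + k) \<sim> l [^] (j + k)"
proof -
  interpret RL: two_sided_group_digraph G R L
    by (unfold_locales) (use L_subset L_nonempty R_subset R_nonempty in auto)
  have l: "l \<in> carrier G" using assms(1) L_subset by auto
  have "weakly_connected G R L (l [^] (- i)) (l [^] (- j))"
    using weakly_connected_inv[OF L_subset R_subset assms(2)] l by (simp add: int_pow_neg)
  then have "weakly_connected G R L (l [^] (- i + - k)) (l [^] (- j + - k))"
    using RL.R_pow_translate assms(1) by blast
  from weakly_connected_inv[OF R_subset L_subset this] l show ?thesis
    by (simp add: int_pow_neg [symmetric] add.commute)
qed

lemma pow_connected_one_neg:
  fixes a :: int
  assumes translate: "\<And>i j k :: int. c [^] i \<sim> c [^] j \<Longrightarrow> c [^] (i + k) \<sim> c [^] (j + k)"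
    and "c [^] a \<sim> \<one>"
  shows "c [^] (- a) \<sim> \<one>"
proof -
  have "c [^] (a + - a) \<sim> c [^] (0 + - a)"
    using translate[of a 0 "- a"] assms(2) by simp
  then show ?thesis by (simp add: weakly_connected_sym)
qed

lemma exists_different_lengths_iff_positive:
  assumes "S \<noteq> {}"
    and words: "\<And>xs. set xs \<subseteq> S \<Longrightarrow> word_val G xs \<sim> c [^] int (length xs)"
    and translate: "\<And>i j k :: int. c [^] i \<sim> c [^] j \<Longrightarrow> c [^] (i + k) \<sim> c [^] (j + k)"
  shows "(\<exists>xs ys. set xs \<subseteq> S \<and> set ys \<subseteq> S \<and> length xs \<noteq> length ys \<and>
            word_val G xs \<sim> word_val G ys)
     \<longleftrightarrow> (\<exists>xs. set xs \<subseteq> S \<and> length xs > 0 \<and> word_val G xs \<sim> \<one>)"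
proof
  have shorter: "\<exists>zs. set zs \<subseteq> S \<and> length zs > 0 \<and> word_val G zs \<sim> \<one>"
    if "set xs \<subseteq> S" "set ys \<subseteq> S" "length xs < length ys" "word_val G xs \<sim> word_val G ys"
    for xs ys
  proof -
    define m n where "m = int (length xs)" and "n = int (length ys)"
    obtain s where s: "s \<in> S" using \<open>S \<noteq> {}\<close> by blast
    have "c [^] m \<sim> c [^] n"
      using that words[of xs] words[of ys] unfolding m_def n_def
      by (blast intro: weakly_connected_sym weakly_connected_trans)
    then have "c [^] (m + - n) \<sim> c [^] (n + - n)" by (rule translate)
    then have "c [^] (m + - n) \<sim> \<one>" by simp
    then have "c [^] (- (m + - n)) \<sim> \<one>"
      using pow_connected_one_neg translate by blast
    moreover have "- (m + - n) = int (length ys - length xs)"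
      using that(3) by (simp add: m_def n_def)
    ultimately have "word_val G (replicate (length ys - length xs) s) \<sim> \<one>"
      using words[of "replicate (length ys - length xs) s"] s that(3)
      by (auto simp: set_replicate_conv_if intro: weakly_connected_trans)
    with s that(3) show ?thesis
      by (intro exI[of _ "replicate (length ys - length xs) s"]) auto
  qed
  assume "\<exists>xs ys. set xs \<subseteq> S \<and> set ys \<subseteq> S \<and> length xs \<noteq> length ys \<and>
            word_val G xs \<sim> word_val G ys"
  then obtain xs ys where "set xs \<subseteq> S" "set ys \<subseteq> S" "length xs \<noteq> length ys"
      "word_val G xs \<sim> word_val G ys"
    by blast
  then show "\<exists>zs. set zs \<subseteq> S \<and> length zs > 0 \<and> word_val G zs \<sim> \<one>"
    using shorter[of xs ys] shorter[of ys xs]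
    by (cases "length xs < length ys") (auto intro: weakly_connected_sym)
next
  assume "\<exists>xs. set xs \<subseteq> S \<and> length xs > 0 \<and> word_val G xs \<sim> \<one>"
  then show "\<exists>xs ys. set xs \<subseteq> S \<and> set ys \<subseteq> S \<and> length xs \<noteq> length ys \<and>
      word_val G xs \<sim> word_val G ys"
    by (metis empty_subsetI list.set(1) list.size(3) less_numeral_extra(3) word_val_Nil)
qed

lemma exists_same_length_iff:
  assumes "S \<noteq> {}" "T \<noteq> {}"
    and S_words: "\<And>xs. set xs \<subseteq> S \<Longrightarrow> word_val G xs \<sim> c [^] int (length xs)"
    and T_words: "\<And>xs. set xs \<subseteq> T \<Longrightarrow> word_val G xs \<sim> c [^] - int (length xs)"
    and translate: "\<And>i j k :: int. c [^] i \<sim> c [^] j \<Longrightarrow> c [^] (i + k) \<sim> c [^] (j + k)"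
  shows "(\<exists>xs. set xs \<subseteq> S \<and> length xs = n \<and> word_val G xs \<sim> \<one>)
     \<longleftrightarrow> (\<exists>xs. set xs \<subseteq> T \<and> length xs = n \<and> word_val G xs \<sim> \<one>)"
proof
  assume "\<exists>xs. set xs \<subseteq> S \<and> length xs = n \<and> word_val G xs \<sim> \<one>"
  then have "c [^] int n \<sim> \<one>"
    using S_words by (blast intro: weakly_connected_sym weakly_connected_trans)
  then have "c [^] - int n \<sim> \<one>" using pow_connected_one_neg translate by blast
  moreover obtain t where "t \<in> T" using \<open>T \<noteq> {}\<close> by blast
  ultimately show "\<exists>xs. set xs \<subseteq> T \<and> length xs = n \<and> word_val G xs \<sim> \<one>"
    using T_words[of "replicate n t"]
    by (intro exI[of _ "replicate n t"]) (auto simp: set_replicate_conv_if intro: weakly_connected_trans)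
next
  assume "\<exists>xs. set xs \<subseteq> T \<and> length xs = n \<and> word_val G xs \<sim> \<one>"
  then have "c [^] - int n \<sim> \<one>"
    using T_words by (blast intro: weakly_connected_sym weakly_connected_trans)
  then have "c [^] - (- int n) \<sim> \<one>" using pow_connected_one_neg translate by blast
  then have "c [^] int n \<sim> \<one>" by simp
  moreover obtain s where "s \<in> S" using \<open>S \<noteq> {}\<close> by blast
  ultimately show "\<exists>xs. set xs \<subseteq> S \<and> length xs = n \<and> word_val G xs \<sim> \<one>"
    using S_words[of "replicate n s"]
    by (intro exI[of _ "replicate n s"]) (auto simp: set_replicate_conv_if intro: weakly_connected_trans)
qed

lemma L_words_different_lengths_iff:
  "(\<exists>xs ys. set xs \<subseteq> L \<and> set ys \<subseteq> L \<and> length xs \<noteq> length ys \<and>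
      word_val G xs \<sim> word_val G ys)
   \<longleftrightarrow> (\<exists>xs. set xs \<subseteq> L \<and> length xs > 0 \<and> word_val G xs \<sim> \<one>)"
proof -
  obtain r where "r \<in> R" using R_nonempty by blast
  then show ?thesis
    by (intro exists_different_lengths_iff_positive L_nonempty L_word_connected_pow R_pow_translate)
qed

lemma L_words_same_length_iff:
  "(\<exists>xs. set xs \<subseteq> L \<and> length xs = n \<and> word_val G xs \<sim> \<one>)
   \<longleftrightarrow> (\<exists>xs. set xs \<subseteq> set_inv G L \<and> length xs = n \<and> word_val G xs \<sim> \<one>)"
proof -
  obtain r where "r \<in> R" using R_nonempty by blast
  then show ?thesis
    using L_nonempty
    by (intro exists_same_length_iff L_word_connected_pow inv_L_word_connected_pow R_pow_translate)
      (auto simp: set_inv_def)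
qed

lemma R_words_different_lengths_iff:
  "(\<exists>xs ys. set xs \<subseteq> R \<and> set ys \<subseteq> R \<and> length xs \<noteq> length ys \<and>
      word_val G xs \<sim> word_val G ys)
   \<longleftrightarrow> (\<exists>xs. set xs \<subseteq> R \<and> length xs > 0 \<and> word_val G xs \<sim> \<one>)"
proof -
  obtain l where "l \<in> L" using L_nonempty by blast
  then show ?thesis
    by (intro exists_different_lengths_iff_positive R_nonempty R_word_connected_pow L_pow_translate)
qed

lemma R_words_same_length_iff:
  "(\<exists>xs. set xs \<subseteq> R \<and> length xs = n \<and> word_val G xs \<sim> \<one>)
   \<longleftrightarrow> (\<exists>xs. set xs \<subseteq> set_inv G R \<and> length xs = n \<and> word_val G xs \<sim> \<one>)"
proof -
  obtain l where "l \<in> L" using L_nonempty by blast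
  then show ?thesis
    using R_nonempty
    by (intro exists_same_length_iff R_word_connected_pow inv_R_word_connected_pow L_pow_translate)
      (auto simp: set_inv_def)
qed

end

theorem mainTheorem3:
  fixes G :: "('a, 'b) monoid_scheme" and L R :: "'a set"
  assumes "group G"
    and "L \<subseteq> carrier G" and "L \<noteq> {}"
    and "R \<subseteq> carrier G" and "R \<noteq> {}"
  shows
    "((\<exists>xs ys. set xs \<subseteq> L \<and> set ys \<subseteq> L \<and> length xs \<noteq> length ys \<and>
         weakly_connected G L R (word_val G xs) (word_val G ys))
      \<longleftrightarrow> (\<exists>xs. set xs \<subseteq> L \<and> length xs > 0 \<and>
         weakly_connected G L R (word_val G xs) \<one>\<^bsub>G\<^esub>))
   \<and> (\<forall>n::nat. n \<ge> 1 \<longrightarrow>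
       ((\<exists>xs. set xs \<subseteq> L \<and> length xs = n \<and> weakly_connected G L R (word_val G xs) \<one>\<^bsub>G\<^esub>)
        \<longleftrightarrow> (\<exists>xs. set xs \<subseteq> set_inv G L \<and> length xs = n \<and>
              weakly_connected G L R (word_val G xs) \<one>\<^bsub>G\<^esub>)))
   \<and> ((\<exists>xs ys. set xs \<subseteq> R \<and> set ys \<subseteq> R \<and> length xs \<noteq> length ys \<and>
         weakly_connected G L R (word_val G xs) (word_val G ys))
      \<longleftrightarrow> (\<exists>xs. set xs \<subseteq> R \<and> length xs > 0 \<and>
         weakly_connected G L R (word_val G xs) \<one>\<^bsub>G\<^esub>))
   \<and> (\<forall>n::nat. n \<ge> 1 \<longrightarrow>
       ((\<exists>xs. set xs \<subseteq> R \<and> length xs = n \<and> weakly_connected G L R (word_val G xs) \<one>\<^bsub>G\<^esub>)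
        \<longleftrightarrow> (\<exists>xs. set xs \<subseteq> set_inv G R \<and> length xs = n \<and>
              weakly_connected G L R (word_val G xs) \<one>\<^bsub>G\<^esub>)))"
proof -
  interpret two_sided_group_digraph G L R
    by (intro two_sided_group_digraph.intro two_sided_group_digraph_axioms.intro assms)
  show ?thesis
    using L_words_different_lengths_iff L_words_same_length_iff
      R_words_different_lengths_iff R_words_same_length_iff
    by blast
qed

end
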